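(* Let $E$ be a $KB$-space, let $\mathfrak{B}$ be a Boolean subalgebra of $\mathfrak{B}(E)$, let $\xi$ be a forward filtration in $\mathfrak{B}$ and let $T$ be a $\mathfrak{B}$-Volterra operator on $E$. Then for every $k\ge0$: $\iota_{L^k(\xi)}\circ T=\hat{T}_{L^k(\xi)}\circ\iota_{L^k(\xi)}$, $\mathbf{s}\circ\hat{T}_{L^k(\xi)}=\hat{T}_{L^{k+1}(\xi)}\circ\mathbf{s}$ on $\mathcal{M}_b(L^k(\xi))$, and $\mathbf{s}\circ\iota_{L^k(\xi)}=\iota_{L^{k+1}(\xi)}$; all maps are norm continuous operators between Banach lattices. Moreover, if $\hat{T}_\xi\colon\mathcal{M}_b(\xi)\to\mathcal{M}_b(\xi)$ is surjective then $\hat{T}_{L^k(\xi)}$ is open for every $k\ge1$.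
   Context: A $KB$-space is a Banach lattice in which every increasing norm bounded sequence is norm convergent. $\mathfrak{B}(E)$ is the Boolean algebra of all order projections on $E$ ($\pi\le\rho$ iff $\pi\rho=\pi$, zero $\mathbf 0$, unit $\mathbf 1=I_E$). A positive operator $T$ is $\mathfrak{B}$-Volterra if for all $\pi\in\mathfrak{B}$, $x,y\in E$, $\pi x=\pi y$ implies $\pi Tx=\pi Ty$. A forward filtration in $\mathfrak{B}$ is a map $\xi\colon\{0,1,\dots,\infty\}\to\mathfrak{B}$ with $\xi_n\le\xi_{n+1}$, $\xi_0=\mathbf 0$, $\xi_\infty=\mathbf 1$; $L(\xi)_0=\xi_0$, $L(\xi)_n=\xi_{n+1}$ ($n\ge1$), $L^k$ is the $k$-th iterate, $L^0(\xi)=\xi$. $\mathcal{M}_b(\xi)$ is the Banach lattice of sequences $(x_n)_{n\ge1}$ in $E$ with $\xi_nx_m=x_n$ for $m\ge n\ge1$ and $\sup_n\|x_n\|<\infty$ (coordinatewise order, sup norm). $\iota_\xi(x)=(\xi_nx)_{n\ge1}$, $\hat{T}_\xi((x_n))=(\xi_nTx_n)$, $\mathbf{s}((x_n)_{n\ge1})=(x_{n+1})_{n\ge1}$ (mapping $\mathcal{M}_b(\xi)$ to $\mathcal{M}_b(L(\xi))$). *)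

theory Defs
  imports "HOL-Analysis.Analysis"
begin

class banach_lattice = banach + lattice +
  assumes bl_add_left_mono: "x \<le> y \<Longrightarrow> z + x \<le> z + y"
  assumes bl_scaleR_mono: "x \<le> y \<Longrightarrow> 0 \<le> c \<Longrightarrow> c *\<^sub>R x \<le> c *\<^sub>R y"
  assumes bl_norm_mono: "sup x (- x) \<le> sup y (- y) \<Longrightarrow> norm x \<le> norm y"

definition KB_space :: "'a::banach_lattice itself \<Rightarrow> bool" where
  "KB_space _ \<longleftrightarrow>
     (\<forall>x::nat \<Rightarrow> 'a. incseq x \<and> bounded (range x) \<longrightarrow> convergent x)"

definition order_projection :: "('a::banach_lattice \<Rightarrow> 'a) \<Rightarrow> bool" where
  "order_projection \<pi> \<longleftrightarrow> linear \<pi> \<and> \<pi> \<circ> \<pi> = \<pi> \<and>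
     (\<forall>x. 0 \<le> x \<longrightarrow> 0 \<le> \<pi> x \<and> \<pi> x \<le> x)"

definition proj_le :: "('a \<Rightarrow> 'a) \<Rightarrow> ('a \<Rightarrow> 'a) \<Rightarrow> bool" where
  "proj_le \<pi> \<rho> \<longleftrightarrow> \<pi> \<circ> \<rho> = \<pi>"

definition boolean_subalgebra :: "('a::banach_lattice \<Rightarrow> 'a) set \<Rightarrow> bool" where
  "boolean_subalgebra B \<longleftrightarrow>
     (\<forall>\<pi>\<in>B. order_projection \<pi>) \<and> (\<lambda>x. 0) \<in> B \<and> id \<in> B \<and>
     (\<forall>\<pi>\<in>B. \<forall>\<rho>\<in>B. \<pi> \<circ> \<rho> \<in> B) \<and>
     (\<forall>\<pi>\<in>B. \<forall>\<rho>\<in>B. (\<lambda>x. \<pi> x + \<rho> x - \<pi> (\<rho> x)) \<in> B) \<and>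
     (\<forall>\<pi>\<in>B. (\<lambda>x. x - \<pi> x) \<in> B)"

definition positive_operator :: "('a::banach_lattice \<Rightarrow> 'a) \<Rightarrow> bool" where
  "positive_operator T \<longleftrightarrow> linear T \<and> (\<forall>x. 0 \<le> x \<longrightarrow> 0 \<le> T x)"

definition volterra :: "('a::banach_lattice \<Rightarrow> 'a) set \<Rightarrow> ('a \<Rightarrow> 'a) \<Rightarrow> bool" where
  "volterra B T \<longleftrightarrow> positive_operator T \<and>
     (\<forall>\<pi>\<in>B. \<forall>x y. \<pi> x = \<pi> y \<longrightarrow> \<pi> (T x) = \<pi> (T y))"

text \<open>A forward filtration \<xi> : {0,1,...,\<infinity>} \<rightarrow> B. We store \<xi>_n for finite n;
the value \<xi>_\<infinity> is always the identity (which lies in B), so it is not stored.\<close>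
definition forward_filtration ::
  "('a::banach_lattice \<Rightarrow> 'a) set \<Rightarrow> (nat \<Rightarrow> 'a \<Rightarrow> 'a) \<Rightarrow> bool" where
  "forward_filtration B \<xi> \<longleftrightarrow>
     (\<forall>n. \<xi> n \<in> B) \<and> (\<forall>n. proj_le (\<xi> n) (\<xi> (Suc n))) \<and> \<xi> 0 = (\<lambda>x. 0)"

definition Lshift :: "(nat \<Rightarrow> 'a \<Rightarrow> 'a) \<Rightarrow> (nat \<Rightarrow> 'a \<Rightarrow> 'a)" where
  "Lshift \<xi> = (\<lambda>n. if n = 0 then \<xi> 0 else \<xi> (Suc n))"

text \<open>Sequences (x_n)_{n\<ge>1} are represented as functions nat \<Rightarrow> 'a with x 0 = 0.\<close>
definition Mb :: "(nat \<Rightarrow> 'a::banach_lattice \<Rightarrow> 'a) \<Rightarrow> (nat \<Rightarrow> 'a) set" where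
  "Mb \<xi> = {x. x 0 = 0 \<and> (\<forall>n m. 1 \<le> n \<and> n \<le> m \<longrightarrow> \<xi> n (x m) = x n) \<and>
              bounded (range x)}"

definition supnorm :: "(nat \<Rightarrow> 'a::real_normed_vector) \<Rightarrow> real" where
  "supnorm x = (SUP n\<in>{1..}. norm (x n))"

definition iota :: "(nat \<Rightarrow> 'a \<Rightarrow> 'a) \<Rightarrow> 'a \<Rightarrow> (nat \<Rightarrow> 'a)" where
  "iota \<xi> x = (\<lambda>n. \<xi> n x)"

definition hatT :: "('a \<Rightarrow> 'a) \<Rightarrow> (nat \<Rightarrow> 'a \<Rightarrow> 'a) \<Rightarrow> (nat \<Rightarrow> 'a) \<Rightarrow> (nat \<Rightarrow> 'a)" where
  "hatT T \<xi> x = (\<lambda>n. \<xi> n (T (x n)))"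

definition sshift :: "(nat \<Rightarrow> 'a::zero) \<Rightarrow> (nat \<Rightarrow> 'a)" where
  "sshift x = (\<lambda>n. if n = 0 then 0 else x (Suc n))"

definition seq_bounded_op ::
  "(nat \<Rightarrow> 'a::real_normed_vector) set \<Rightarrow> (nat \<Rightarrow> 'a) set \<Rightarrow>
   ((nat \<Rightarrow> 'a) \<Rightarrow> (nat \<Rightarrow> 'a)) \<Rightarrow> bool" where
  "seq_bounded_op A B f \<longleftrightarrow> (\<forall>x\<in>A. f x \<in> B) \<and>
     (\<forall>x\<in>A. \<forall>y\<in>A. \<forall>a b. f (\<lambda>n. a *\<^sub>R x n + b *\<^sub>R y n) = (\<lambda>n. a *\<^sub>R f x n + b *\<^sub>R f y n)) \<and>
     (\<exists>C. \<forall>x\<in>A. supnorm (f x) \<le> C * supnorm x)"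

definition emb_bounded_op ::
  "(nat \<Rightarrow> 'a::real_normed_vector) set \<Rightarrow> ('a \<Rightarrow> (nat \<Rightarrow> 'a)) \<Rightarrow> bool" where
  "emb_bounded_op B f \<longleftrightarrow> (\<forall>x. f x \<in> B) \<and>
     (\<forall>x y a b. f (a *\<^sub>R x + b *\<^sub>R y) = (\<lambda>n. a *\<^sub>R f x n + b *\<^sub>R f y n)) \<and>
     (\<exists>C. \<forall>x. supnorm (f x) \<le> C * norm x)"

definition seq_open_map :: "(nat \<Rightarrow> 'a::real_normed_vector) set \<Rightarrow>
   ((nat \<Rightarrow> 'a) \<Rightarrow> (nat \<Rightarrow> 'a)) \<Rightarrow> bool" where
  "seq_open_map A f \<longleftrightarrow>
     (\<forall>U \<subseteq> A. (\<forall>u\<in>U. \<exists>e>0. \<forall>v\<in>A. supnorm (\<lambda>n. v n - u n) < e \<longrightarrow> v \<in> U) \<longrightarrow>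
        (\<forall>w\<in>f ` U. \<exists>d>0. \<forall>v\<in>A. supnorm (\<lambda>n. v n - w n) < d \<longrightarrow> v \<in> f ` U))"

end

theory Submission
  imports Defs "HOL-Library.Lattice_Algebras"
begin

text \<open>
  A positive operator on a Banach lattice is bounded: otherwise there are positive \<open>v\<^sub>n\<close> with
  \<open>norm v\<^sub>n = 2\<^sup>-\<^sup>n\<close> and \<open>norm (T v\<^sub>n) > n\<close>, while \<open>0 \<le> T v\<^sub>n \<le> T (\<Sum>k. v\<^sub>k)\<close> bounds these
  norms by monotonicity of the lattice norm. For \<open>\<pi> = \<xi> n\<close> the Volterra
  property gives \<open>\<xi> n (T (\<xi> m x)) = \<xi> n (T x)\<close> for \<open>n \<le> m\<close>; this makes \<open>iota\<close> intertwine
  \<open>T\<close> with \<open>hatT\<close> and makes \<open>hatT\<close> preserve the compatibility condition defining \<open>Mb\<close>, while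
  the shift identities are reindexings.

  The shift maps \<open>Mb \<xi>\<close> onto \<open>Mb (Lshift \<xi>)\<close>, so surjectivity of \<open>hatT\<close> propagates along
  \<open>Lshift ^^ k\<close>. Openness then follows from the open mapping theorem (derived from Baire's
  theorem), applied to \<open>Mb\<close> realised as a closed subspace of the bounded functions
  \<open>nat \<Rightarrow>\<^sub>C E\<close>.
\<close>

section \<open>Banach lattices\<close>

subclass (in banach_lattice) ordered_ab_group_add
  by standard (rule bl_add_left_mono)

subclass (in banach_lattice) lattice_ab_group_add ..

lemma sup_uminus_nonneg: "0 \<le> sup x (- x)" for x :: "'a::banach_lattice"
proof -
  have "x + - x \<le> sup x (- x) + sup x (- x)"
    by (intro add_mono) auto
  then show ?thesis
    by simp
qed

lemma sup_uminus_eq_self: "0 \<le> x \<Longrightarrow> sup x (- x) = x" for x :: "'a::banach_lattice"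
  by (simp add: sup.absorb1 order_trans[of "- x" 0 x])

lemma norm_sup_uminus: "norm (sup x (- x)) = norm x" for x :: "'a::banach_lattice"
proof -
  have "sup (sup x (- x)) (- sup x (- x)) = sup x (- x)"
    by (rule sup_uminus_eq_self[OF sup_uminus_nonneg])
  then show ?thesis
    by (intro antisym bl_norm_mono) simp_all
qed

lemma norm_le_norm_if_abs_le: "x \<le> z \<Longrightarrow> - x \<le> z \<Longrightarrow> norm x \<le> norm z"
  for x z :: "'a::banach_lattice"
  by (intro bl_norm_mono)
    (metis le_sup_iff order_trans sup_uminus_eq_self sup_uminus_nonneg sup_least)

lemma norm_mono_nonneg: "0 \<le> x \<Longrightarrow> x \<le> y \<Longrightarrow> norm x \<le> norm y" for x y :: "'a::banach_lattice"
  by (rule norm_le_norm_if_abs_le) (auto intro: order_trans[of "- x" 0])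

lemma pprt_le_sup_uminus: "pprt x \<le> sup x (- x)" for x :: "'a::banach_lattice"
  by (simp add: pprt_def sup_uminus_nonneg)

lemma uminus_nprt_le_sup_uminus: "- nprt x \<le> sup x (- x)" for x :: "'a::banach_lattice"
  using pprt_le_sup_uminus[of "- x"] by (simp add: pprt_neg sup_commute)

lemma norm_pprt_le: "norm (pprt x) \<le> norm x" for x :: "'a::banach_lattice"
proof -
  have "norm (pprt x) \<le> norm (sup x (- x))"
  proof (rule norm_le_norm_if_abs_le[OF pprt_le_sup_uminus])
    show "- pprt x \<le> sup x (- x)"
      using sup_uminus_nonneg[of x] by (simp add: order.trans[of _ 0])
  qed
  then show ?thesis
    by (simp only: norm_sup_uminus)
qed

lemma norm_nprt_le: "norm (nprt x) \<le> norm x" for x :: "'a::banach_lattice"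
  using norm_pprt_le[of "- x"] by (simp add: pprt_neg)

lemma norm_nprt_le_norm_diff_nonneg: "0 \<le> y \<Longrightarrow> norm (nprt x) \<le> norm (x - y)"
  for x y :: "'a::banach_lattice"
proof -
  assume "0 \<le> y"
  define z where "z = sup (x - y) (- (x - y))"
  have "0 \<le> z"
    unfolding z_def by (rule sup_uminus_nonneg)
  moreover have "- x \<le> z"
    unfolding z_def using \<open>0 \<le> y\<close> by (intro le_supI2) simp
  ultimately have "norm (nprt x) \<le> norm z"
    by (intro norm_le_norm_if_abs_le) (auto simp: nprt_def neg_inf_eq_sup intro: order_trans[OF _ \<open>0 \<le> z\<close>])
  then show ?thesis unfolding z_def
    by (simp only: norm_sup_uminus)
qed

lemma LIMSEQ_nonneg:
  fixes X :: "nat \<Rightarrow> 'a::banach_lattice"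
  assumes "X \<longlonglongrightarrow> x" and "eventually (\<lambda>n. 0 \<le> X n) sequentially"
  shows "0 \<le> x"
proof -
  have "(\<lambda>n. norm (x - X n)) \<longlonglongrightarrow> 0"
    using tendsto_diff[OF tendsto_const assms(1), of x] by (simp add: tendsto_norm_zero)
  moreover have "eventually (\<lambda>n. norm (nprt x) \<le> norm (x - X n)) sequentially"
    using assms(2) by eventually_elim (rule norm_nprt_le_norm_diff_nonneg)
  ultimately have "norm (nprt x) \<le> 0"
    by (intro tendsto_lowerbound) auto
  then show ?thesis
    by (simp add: zero_le_iff_zero_nprt)
qed

lemma le_suminf_nonneg:
  fixes v :: "nat \<Rightarrow> 'a::banach_lattice"
  assumes "summable v" and "\<And>n. 0 \<le> v n"
  shows "v n \<le> suminf v"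
proof -
  have "(\<lambda>N. sum v {..<N} - v n) \<longlonglongrightarrow> suminf v - v n"
    by (intro tendsto_diff summable_LIMSEQ assms(1) tendsto_const)
  moreover have "eventually (\<lambda>N. 0 \<le> sum v {..<N} - v n) sequentially"
  proof (rule eventually_sequentiallyI[of "Suc n"])
    fix N assume "Suc n \<le> N"
    then have "sum v {..<N} = v n + sum v ({..<N} - {n})"
      by (simp add: sum.remove)
    then show "0 \<le> sum v {..<N} - v n"
      by (simp add: sum_nonneg assms(2))
  qed
  ultimately show ?thesis
    using LIMSEQ_nonneg by fastforce
qed

lemma positive_operator_bounded_on_cone:
  fixes T :: "'a::banach_lattice \<Rightarrow> 'a"
  assumes "positive_operator T"
  obtains C where "\<And>x. 0 \<le> x \<Longrightarrow> norm (T x) \<le> C * norm x"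
proof -
  have lin: "linear T" and pos: "\<And>x. 0 \<le> x \<Longrightarrow> 0 \<le> T x"
    using assms unfolding positive_operator_def by auto
  have "\<exists>C. \<forall>x. 0 \<le> x \<longrightarrow> norm (T x) \<le> C * norm x"
  proof (rule ccontr)
    assume "\<nexists>C. \<forall>x. 0 \<le> x \<longrightarrow> norm (T x) \<le> C * norm x"
    then have "\<forall>n::nat. \<exists>x. 0 \<le> x \<and> real n * 2 ^ n * norm x < norm (T x)"
      by (auto simp: not_le)
    then obtain u where u_nonneg: "\<And>n. 0 \<le> u n"
      and u_large: "\<And>n. real n * 2 ^ n * norm (u n) < norm (T (u n))"
      by metis
    have u_pos: "0 < norm (u n)" for n
      using u_large[of n] by (cases "u n = 0") (simp_all add: linear_0[OF lin])
    define v where "v n = (1 / (2 ^ n * norm (u n))) *\<^sub>R u n" for n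
    have v_nonneg: "0 \<le> v n" for n
      using bl_scaleR_mono[OF u_nonneg[of n], of "1 / (2 ^ n * norm (u n))"] u_pos[of n]
      by (simp add: v_def)
    have norm_v: "norm (v n) = (1 / 2) ^ n" for n
      using u_pos[of n] by (simp add: v_def power_one_over)
    have "summable v"
      by (rule summable_norm_cancel) (simp add: norm_v summable_geometric)
    then have "T (v n) \<le> T (suminf v)" for n
      using pos[of "suminf v - v n"] le_suminf_nonneg[of v n] v_nonneg
      by (simp add: linear_diff[OF lin])
    then have "norm (T (v n)) \<le> norm (T (suminf v))" for n
      by (intro norm_mono_nonneg pos v_nonneg)
    moreover have "real n < norm (T (v n))" for n
      using u_large[of n] u_pos[of n] by (simp add: v_def linear_scale[OF lin] field_simps)
    moreover obtain n where "norm (T (suminf v)) < real n"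
      using reals_Archimedean2 by blast
    ultimately show False
      by (meson order.strict_trans not_less)
  qed
  then show ?thesis
    using that by blast
qed

lemma positive_operator_bounded_linear:
  fixes T :: "'a::banach_lattice \<Rightarrow> 'a"
  assumes "positive_operator T"
  shows "bounded_linear T"
proof -
  have lin: "linear T"
    using assms unfolding positive_operator_def by simp
  obtain C where C: "\<And>x. 0 \<le> x \<Longrightarrow> norm (T x) \<le> C * norm x"
    using positive_operator_bounded_on_cone[OF assms] by blast
  have C': "norm (T z) \<le> max C 0 * norm z" if "0 \<le> z" for z
    using C[OF that] mult_right_mono[of C "max C 0" "norm z"] by simp
  show ?thesis
  proof (rule bounded_linear_intro[where K = "2 * max C 0"])
    show "T (x + y) = T x + T y" "T (r *\<^sub>R x) = r *\<^sub>R T x" for x y r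
      by (simp_all add: linear_add[OF lin] linear_scale[OF lin])
    fix x
    have "T x = T (pprt x) - T (- nprt x)"
      by (metis prts lin linear_diff diff_minus_eq_add)
    then have "norm (T x) \<le> norm (T (pprt x)) + norm (T (- nprt x))"
      by (metis norm_triangle_ineq4)
    also have "\<dots> \<le> max C 0 * norm (pprt x) + max C 0 * norm (nprt x)"
      using C'[of "pprt x"] C'[of "- nprt x"] by simp
    also have "\<dots> \<le> max C 0 * norm x + max C 0 * norm x"
      by (intro add_mono mult_left_mono norm_pprt_le norm_nprt_le) auto
    finally show "norm (T x) \<le> norm x * (2 * max C 0)"
      by (simp add: algebra_simps)
  qed
qed

lemma norm_order_projection_le:
  fixes \<pi> :: "'a::banach_lattice \<Rightarrow> 'a"
  assumes "order_projection \<pi>"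
  shows "norm (\<pi> x) \<le> norm x"
proof -
  have lin: "linear \<pi>" and pos: "\<And>z. 0 \<le> z \<Longrightarrow> 0 \<le> \<pi> z \<and> \<pi> z \<le> z"
    using assms unfolding order_projection_def by auto
  have split: "\<pi> x = \<pi> (pprt x) - \<pi> (- nprt x)"
    by (metis prts lin linear_diff diff_minus_eq_add)
  have "\<pi> x \<le> \<pi> (pprt x)"
    unfolding split using pos[of "- nprt x"] by simp
  also have "\<dots> \<le> sup x (- x)"
    using pos[of "pprt x"] pprt_le_sup_uminus[of x] by (auto intro: order.trans)
  finally have "\<pi> x \<le> sup x (- x)" .
  moreover have "- \<pi> x \<le> \<pi> (- nprt x)"
    unfolding split using pos[of "pprt x"] by simp
  then have "- \<pi> x \<le> sup x (- x)"
    using pos[of "- nprt x"] uminus_nprt_le_sup_uminus[of x] by (auto intro: order.trans)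
  ultimately have "norm (\<pi> x) \<le> norm (sup x (- x))"
    by (rule norm_le_norm_if_abs_le)
  then show ?thesis
    by (simp only: norm_sup_uminus)
qed

lemma order_projection_bounded_linear:
  fixes \<pi> :: "'a::banach_lattice \<Rightarrow> 'a"
  assumes "order_projection \<pi>"
  shows "bounded_linear \<pi>"
proof -
  have lin: "linear \<pi>"
    using assms unfolding order_projection_def by simp
  show ?thesis
    by (rule bounded_linear_intro[where K = 1])
      (simp_all add: linear_add[OF lin] linear_scale[OF lin] norm_order_projection_le[OF assms])
qed

section \<open>The open mapping theorem\<close>

lemma closed_countable_cover_contains_ball:
  fixes S :: "'a::complete_space set" and C :: "nat \<Rightarrow> 'a set"
  assumes "closed S" and "S \<noteq> {}" and "S \<subseteq> (\<Union>n. C n)" and "\<And>n. closed (C n)"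
  obtains n y r where "0 < r" and "y \<in> S" and "S \<inter> ball y r \<subseteq> C n"
proof -
  let ?X = "top_of_set S"
  have "\<exists>n y r. 0 < r \<and> y \<in> S \<and> S \<inter> ball y r \<subseteq> C n"
  proof (rule ccontr)
    assume no_ball: "\<not> ?thesis"
    have "?X interior_of \<Union>(range (\<lambda>n. S \<inter> C n)) = {}"
    proof (rule Baire_category_alt)
      have "closedin euclidean S"
        using assms(1) by (simp only: closed_closedin)
      then show "completely_metrizable_space ?X \<or> locally_compact_space ?X \<and> regular_space ?X"
        by (intro disjI1 completely_metrizable_space_closedin completely_metrizable_space_euclidean)
      fix D assume "D \<in> range (\<lambda>n. S \<inter> C n)"
      then obtain n where D: "D = S \<inter> C n"
        by blast
      have "?X interior_of D = {}"
      proof (rule ccontr)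
        assume "?X interior_of D \<noteq> {}"
        then obtain y U where U: "openin ?X U" "y \<in> U" "U \<subseteq> D"
          unfolding interior_of_def by blast
        then obtain r where "0 < r" "ball y r \<inter> S \<subseteq> U"
          unfolding openin_contains_ball by blast
        moreover have "y \<in> S"
          using U(2,3) unfolding D by blast
        ultimately have "0 < r \<and> y \<in> S \<and> S \<inter> ball y r \<subseteq> C n"
          using U(3) unfolding D by blast
        with no_ball show False
          by blast
      qed
      then show "closedin ?X D \<and> ?X interior_of D = {}"
        unfolding D using assms(4) by (simp add: closedin_closed_Int)
    qed simp
    moreover have "\<Union>(range (\<lambda>n. S \<inter> C n)) = S"
      using assms(3) by blast
    ultimately show False
      using assms(2) interior_of_topspace[of ?X] by simp
  qed
  then show ?thesis
    using that by blast
qed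

lemma approximate_preimage_of_small:
  fixes f :: "'a::real_normed_vector \<Rightarrow> 'b::real_normed_vector"
  assumes lin: "linear f" and "subspace X" and y0: "y0 \<in> f ` X"
    and ball: "f ` X \<inter> ball y0 r \<subseteq> closure (f ` (X \<inter> cball 0 R))"
    and y: "y \<in> f ` X" "norm y < r" and "0 < e"
  shows "\<exists>x\<in>X. norm x \<le> 2 * R \<and> norm (f x - y) < e"
proof -
  have near: "\<exists>x\<in>X. norm x \<le> R \<and> norm (f x - z) < e / 2"
    if "z \<in> f ` X" and "dist y0 z < r" for z
  proof -
    have "z \<in> closure (f ` (X \<inter> cball 0 R))"
      by (rule subsetD[OF ball]) (simp add: that)
    then have "\<exists>w\<in>f ` (X \<inter> cball 0 R). dist w z < e / 2"
      by (rule closure_approachable[THEN iffD1, rule_format]) (simp add: \<open>0 < e\<close>)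
    then obtain x where "x \<in> X \<inter> cball 0 R" and "dist (f x) z < e / 2"
      by blast
    then show ?thesis
      by (auto simp: dist_norm)
  qed
  have "subspace (f ` X)"
    using lin \<open>subspace X\<close> by (rule linear_subspace_image)
  then have "y0 + y \<in> f ` X"
    using y0 y(1) by (rule subspace_add)
  moreover have "dist y0 (y0 + y) < r"
    using y(2) by (simp add: dist_norm)
  ultimately obtain x1 where x1: "x1 \<in> X" "norm x1 \<le> R" "norm (f x1 - (y0 + y)) < e / 2"
    using near by blast
  have "dist y0 y0 < r"
    using order.strict_trans1[OF norm_ge_zero y(2)] by simp
  then obtain x2 where x2: "x2 \<in> X" "norm x2 \<le> R" "norm (f x2 - y0) < e / 2"
    using near[OF y0] by blast
  have "f (x1 - x2) - y = (f x1 - (y0 + y)) - (f x2 - y0)"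
    by (simp add: linear_diff[OF lin] algebra_simps)
  then have "norm (f (x1 - x2) - y) \<le> norm (f x1 - (y0 + y)) + norm (f x2 - y0)"
    by (simp only: norm_triangle_ineq4)
  then have "norm (f (x1 - x2) - y) < e"
    using x1(3) x2(3) by linarith
  moreover have "norm (x1 - x2) \<le> 2 * R"
    using norm_triangle_ineq4[of x1 x2] x1(2) x2(2) by linarith
  moreover have "x1 - x2 \<in> X"
    using \<open>subspace X\<close> x1(1) x2(1) by (rule subspace_diff)
  ultimately show ?thesis
    by blast
qed

lemma approximate_preimage_bounded:
  fixes f :: "'a::real_normed_vector \<Rightarrow> 'b::real_normed_vector"
  assumes lin: "linear f" and X: "subspace X" and y0: "y0 \<in> f ` X" and "0 < r"
    and ball: "f ` X \<inter> ball y0 r \<subseteq> closure (f ` (X \<inter> cball 0 R))"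
    and y: "y \<in> f ` X" and "0 < e"
  shows "\<exists>x\<in>X. norm x \<le> 4 * R / r * norm y \<and> norm (f x - y) < e"
proof (cases "y = 0")
  case True
  then show ?thesis
    using \<open>0 < e\<close> subspace_0[OF X] by (auto simp: linear_0[OF lin])
next
  case False
  define t where "t = r / (2 * norm y)"
  have "0 < t"
    using False \<open>0 < r\<close> by (simp add: t_def)
  have "t *\<^sub>R y \<in> f ` X"
    using linear_subspace_image[OF lin X] y by (rule subspace_scale)
  moreover have "norm (t *\<^sub>R y) < r"
    using False \<open>0 < r\<close> by (simp add: t_def)
  moreover have "0 < e * t"
    using \<open>0 < e\<close> \<open>0 < t\<close> by simp
  ultimately obtain x where x: "x \<in> X" "norm x \<le> 2 * R" "norm (f x - t *\<^sub>R y) < e * t"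
    using approximate_preimage_of_small[OF lin X y0 ball] by blast
  have "(1 / t) *\<^sub>R x \<in> X"
    using X x(1) by (rule subspace_scale)
  moreover have "norm ((1 / t) *\<^sub>R x) \<le> 4 * R / r * norm y"
  proof -
    have "norm ((1 / t) *\<^sub>R x) \<le> 2 * R / t"
      using x(2) \<open>0 < t\<close> by (simp add: divide_right_mono)
    also have "\<dots> = 4 * R / r * norm y"
      using False \<open>0 < r\<close> by (simp add: t_def)
    finally show ?thesis .
  qed
  moreover have "f ((1 / t) *\<^sub>R x) - y = (1 / t) *\<^sub>R (f x - t *\<^sub>R y)"
    using \<open>0 < t\<close> by (simp add: linear_scale[OF lin] algebra_simps)
  then have "norm (f ((1 / t) *\<^sub>R x) - y) < e"
    using x(3) \<open>0 < t\<close> by (simp add: pos_divide_less_eq)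
  ultimately show ?thesis
    by blast
qed

lemma approximate_preimage_series:
  fixes f :: "'a::real_normed_vector \<Rightarrow> 'b::real_normed_vector"
  assumes lin: "linear f" and X: "subspace X" and "0 \<le> K"
    and approx: "\<And>y e. y \<in> f ` X \<Longrightarrow> 0 < e \<Longrightarrow>
                   \<exists>x\<in>X. norm x \<le> K * norm y \<and> norm (f x - y) < e"
    and y: "y \<in> f ` X" and "0 < a" and "norm y \<le> a"
  obtains x where "\<And>k. x k \<in> X" and "\<And>k. norm (x k) \<le> K * a * (1 / 2) ^ k"
    and "\<And>N. norm (y - f (\<Sum>k<N. x k)) \<le> a * (1 / 2) ^ N"
proof -
  obtain g where g: "\<And>z e. z \<in> f ` X \<Longrightarrow> 0 < e \<Longrightarrow>
      g z e \<in> X \<and> norm (g z e) \<le> K * norm z \<and> norm (f (g z e) - z) < e"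
    using approx by metis
  define R where "R = rec_nat y (\<lambda>k z. z - f (g z (a * (1 / 2) ^ Suc k)))"
  define x where "x k = g (R k) (a * (1 / 2) ^ Suc k)" for k
  have R_Suc: "R (Suc k) = R k - f (x k)" for k
    by (simp add: R_def x_def)
  have R: "R k \<in> f ` X \<and> norm (R k) \<le> a * (1 / 2) ^ k" for k
  proof (induction k)
    case 0
    show ?case
      using y \<open>norm y \<le> a\<close> by (simp add: R_def)
  next
    case (Suc k)
    have "x k \<in> X" and "norm (f (x k) - R k) < a * (1 / 2) ^ Suc k"
      using g[of "R k" "a * (1 / 2) ^ Suc k"] Suc.IH \<open>0 < a\<close> by (simp_all add: x_def)
    moreover have "subspace (f ` X)"
      using lin X by (rule linear_subspace_image)
    ultimately show ?case
      using Suc.IH by (simp add: R_Suc subspace_diff norm_minus_commute)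
  qed
  show ?thesis
  proof (rule that)
    show "x k \<in> X" for k
      using g[of "R k" "a * (1 / 2) ^ Suc k"] R[of k] \<open>0 < a\<close> by (simp add: x_def)
    show "norm (x k) \<le> K * a * (1 / 2) ^ k" for k
    proof -
      have "norm (x k) \<le> K * norm (R k)"
        using g[of "R k" "a * (1 / 2) ^ Suc k"] R[of k] \<open>0 < a\<close> by (simp add: x_def)
      also have "\<dots> \<le> K * (a * (1 / 2) ^ k)"
        using R[of k] \<open>0 \<le> K\<close> by (simp add: mult_left_mono)
      finally show ?thesis
        by (simp add: mult.assoc)
    qed
    have "R N = y - f (\<Sum>k<N. x k)" for N
      by (induction N) (simp_all add: R_Suc linear_0[OF lin] linear_add[OF lin], simp add: R_def)
    then show "norm (y - f (\<Sum>k<N. x k)) \<le> a * (1 / 2) ^ N" for N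
      using R[of N] by simp
  qed
qed

lemma exact_preimage_from_approximate:
  fixes f :: "'a::banach \<Rightarrow> 'b::real_normed_vector"
  assumes bl: "bounded_linear f" and "closed X" and X: "subspace X" and "0 \<le> K"
    and approx: "\<And>y e. y \<in> f ` X \<Longrightarrow> 0 < e \<Longrightarrow>
                   \<exists>x\<in>X. norm x \<le> K * norm y \<and> norm (f x - y) < e"
    and y: "y \<in> f ` X"
  shows "\<exists>x\<in>X. f x = y \<and> norm x \<le> 2 * K * norm y"
proof (cases "y = 0")
  case True
  then show ?thesis
    using subspace_0[OF X] linear_0[OF bounded_linear.linear[OF bl]] by auto
next
  case False
  have lin: "linear f"
    using bl by (rule bounded_linear.linear)
  obtain x where x_in: "\<And>k. x k \<in> X" and x_norm: "\<And>k. norm (x k) \<le> K * norm y * (1 / 2) ^ k"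
    and residual: "\<And>N. norm (y - f (\<Sum>k<N. x k)) \<le> norm y * (1 / 2) ^ N"
    using approximate_preimage_series[OF lin X \<open>0 \<le> K\<close> approx y _ order_refl] False
    by (metis zero_less_norm_iff)
  have geometric: "summable (\<lambda>k. K * norm y * (1 / 2 :: real) ^ k)"
    by (intro summable_mult summable_geometric) simp
  then have "summable x"
    by (rule summable_comparison_test'[OF _ x_norm])
  then have partial: "(\<lambda>N. \<Sum>k<N. x k) \<longlonglongrightarrow> suminf x"
    by (rule summable_LIMSEQ)
  have "suminf x \<in> X"
    by (rule closed_sequentially[OF \<open>closed X\<close> _ partial]) (simp add: subspace_sum[OF X] x_in)
  moreover have "norm (suminf x) \<le> 2 * K * norm y"
  proof -
    have "norm (suminf x) \<le> (\<Sum>k. K * norm y * (1 / 2 :: real) ^ k)"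
      by (rule norm_suminf_le[OF x_norm geometric])
    also have "\<dots> = 2 * K * norm y"
      by (simp add: suminf_mult suminf_geometric)
    finally show ?thesis .
  qed
  moreover have "f (suminf x) = y"
  proof (rule LIMSEQ_unique)
    show "(\<lambda>N. f (\<Sum>k<N. x k)) \<longlonglongrightarrow> f (suminf x)"
      using bl partial by (rule bounded_linear.tendsto)
    have "(\<lambda>N. norm y * (1 / 2 :: real) ^ N) \<longlonglongrightarrow> 0"
      by (intro tendsto_mult_right_zero LIMSEQ_power_zero) simp
    then have "(\<lambda>N. y - f (\<Sum>k<N. x k)) \<longlonglongrightarrow> 0"
      by (rule Lim_null_comparison[rotated]) (simp add: residual)
    from tendsto_diff[OF tendsto_const this, of y]
    show "(\<lambda>N. f (\<Sum>k<N. x k)) \<longlonglongrightarrow> y"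
      by simp
  qed
  ultimately show ?thesis
    by blast
qed

theorem open_mapping_bounded_preimage:
  fixes f :: "'a::banach \<Rightarrow> 'b::banach"
  assumes bl: "bounded_linear f" and "closed X" and X: "subspace X" and "closed (f ` X)"
  obtains c where "0 < c" and "\<And>y. y \<in> f ` X \<Longrightarrow> \<exists>x\<in>X. f x = y \<and> norm x \<le> c * norm y"
proof -
  have lin: "linear f"
    using bl by (rule bounded_linear.linear)
  have "f ` X \<subseteq> (\<Union>n. closure (f ` (X \<inter> cball 0 (real n))))"
  proof
    fix y assume "y \<in> f ` X"
    then obtain x where "x \<in> X" and "y = f x"
      by blast
    moreover obtain n where "norm x \<le> real n"
      using real_arch_simple by blast
    ultimately have "y \<in> f ` (X \<inter> cball 0 (real n))"
      by simp
    then have "y \<in> closure (f ` (X \<inter> cball 0 (real n)))"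
      by (rule subsetD[OF closure_subset])
    then show "y \<in> (\<Union>n. closure (f ` (X \<inter> cball 0 (real n))))"
      by (rule UN_I[OF UNIV_I])
  qed
  moreover have "f ` X \<noteq> {}"
    using subspace_0[OF X] by blast
  ultimately obtain n y0 r where "0 < r" and "y0 \<in> f ` X"
    and ball: "f ` X \<inter> ball y0 r \<subseteq> closure (f ` (X \<inter> cball 0 (real n)))"
    using closed_countable_cover_contains_ball[OF \<open>closed (f ` X)\<close>] by (metis closed_closure)
  define K where "K = 4 * real n / r"
  have "0 \<le> K"
    using \<open>0 < r\<close> by (simp add: K_def)
  have approx: "\<exists>x\<in>X. norm x \<le> K * norm y \<and> norm (f x - y) < e"
    if "y \<in> f ` X" and "0 < e" for y e
    unfolding K_def by (rule approximate_preimage_bounded[OF lin X \<open>y0 \<in> f ` X\<close> \<open>0 < r\<close> ball that])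
  show ?thesis
  proof (rule that)
    show "0 < 2 * K + 1"
      using \<open>0 \<le> K\<close> by simp
    fix y assume "y \<in> f ` X"
    then obtain x where "x \<in> X" and "f x = y" and "norm x \<le> 2 * K * norm y"
      using exact_preimage_from_approximate[OF bl \<open>closed X\<close> X \<open>0 \<le> K\<close> approx] by blast
    moreover have "2 * K * norm y \<le> (2 * K + 1) * norm y"
      by (simp add: distrib_right)
    ultimately show "\<exists>x\<in>X. f x = y \<and> norm x \<le> (2 * K + 1) * norm y"
      using order.trans by blast
  qed
qed

section \<open>Bounded sequences\<close>

lemma norm_le_supnorm:
  fixes x :: "nat \<Rightarrow> 'a::real_normed_vector"
  assumes "bounded (range x)" and "1 \<le> n"
  shows "norm (x n) \<le> supnorm x"
proof -
  have "bounded ((\<lambda>n. norm (x n)) ` {1..})"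
    using assms(1) by (auto simp: bounded_norm_comp intro: bounded_subset)
  then show ?thesis
    unfolding supnorm_def using assms(2) by (intro cSUP_upper bounded_imp_bdd_above) auto
qed

lemma supnorm_le:
  fixes x :: "nat \<Rightarrow> 'a::real_normed_vector"
  assumes "\<And>n. 1 \<le> n \<Longrightarrow> norm (x n) \<le> b"
  shows "supnorm x \<le> b"
  unfolding supnorm_def using assms by (intro cSUP_least) auto

lemma supnorm_nonneg:
  fixes x :: "nat \<Rightarrow> 'a::real_normed_vector"
  assumes "bounded (range x)"
  shows "0 \<le> supnorm x"
  using norm_le_supnorm[OF assms, of 1] norm_ge_zero[of "x 1"] by linarith

lemma MbD:
  assumes "x \<in> Mb \<xi>"
  shows "x 0 = 0" and "1 \<le> n \<Longrightarrow> n \<le> m \<Longrightarrow> \<xi> n (x m) = x n" and "bounded (range x)"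
  using assms unfolding Mb_def by auto

lemma MbI:
  assumes "x 0 = 0" and "\<And>n m. 1 \<le> n \<Longrightarrow> n \<le> m \<Longrightarrow> \<xi> n (x m) = x n"
    and "\<And>n. norm (x n) \<le> M"
  shows "x \<in> Mb \<xi>"
  using assms unfolding Mb_def by (auto intro: boundedI)

lemma seq_open_map_if_bounded_preimage:
  fixes f :: "(nat \<Rightarrow> 'a::real_normed_vector) \<Rightarrow> (nat \<Rightarrow> 'a)"
  assumes add: "\<And>x y. x \<in> A \<Longrightarrow> y \<in> A \<Longrightarrow> (\<lambda>n. x n + y n) \<in> A"
    and diff: "\<And>x y. x \<in> A \<Longrightarrow> y \<in> A \<Longrightarrow> (\<lambda>n. x n - y n) \<in> A"
    and f_add: "\<And>x y. x \<in> A \<Longrightarrow> y \<in> A \<Longrightarrow> f (\<lambda>n. x n + y n) = (\<lambda>n. f x n + f y n)"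
    and f_A: "\<And>x. x \<in> A \<Longrightarrow> f x \<in> A"
    and "0 < c" and preimage: "\<And>y. y \<in> A \<Longrightarrow> \<exists>x\<in>A. f x = y \<and> supnorm x \<le> c * supnorm y"
  shows "seq_open_map A f"
  unfolding seq_open_map_def
proof (intro allI impI ballI)
  fix U assume "U \<subseteq> A" and U_open: "\<forall>u\<in>U. \<exists>e>0. \<forall>v\<in>A. supnorm (\<lambda>n. v n - u n) < e \<longrightarrow> v \<in> U"
  fix w assume "w \<in> f ` U"
  then obtain u where "u \<in> U" and w: "w = f u"
    by blast
  then have "u \<in> A"
    using \<open>U \<subseteq> A\<close> by blast
  obtain e where "0 < e" and e: "\<And>v. v \<in> A \<Longrightarrow> supnorm (\<lambda>n. v n - u n) < e \<Longrightarrow> v \<in> U"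
    using U_open \<open>u \<in> U\<close> by blast
  show "\<exists>d>0. \<forall>v\<in>A. supnorm (\<lambda>n. v n - w n) < d \<longrightarrow> v \<in> f ` U"
  proof (intro exI conjI ballI impI)
    show "0 < e / c"
      using \<open>0 < e\<close> \<open>0 < c\<close> by simp
    fix v assume "v \<in> A" and close: "supnorm (\<lambda>n. v n - w n) < e / c"
    have "(\<lambda>n. v n - w n) \<in> A"
      using diff[OF \<open>v \<in> A\<close> f_A[OF \<open>u \<in> A\<close>]] by (simp add: w)
    then obtain z where "z \<in> A" and fz: "f z = (\<lambda>n. v n - w n)"
      and z_small: "supnorm z \<le> c * supnorm (\<lambda>n. v n - w n)"
      using preimage by blast
    have "supnorm (\<lambda>n. (u n + z n) - u n) < e"
      using z_small mult_strict_left_mono[OF close \<open>0 < c\<close>] \<open>0 < c\<close> by simp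
    then have "(\<lambda>n. u n + z n) \<in> U"
      using e add[OF \<open>u \<in> A\<close> \<open>z \<in> A\<close>] by blast
    moreover have "f (\<lambda>n. u n + z n) = v"
      using f_add[OF \<open>u \<in> A\<close> \<open>z \<in> A\<close>] by (simp add: fz flip: w)
    ultimately show "v \<in> f ` U"
      by (metis image_eqI)
  qed
qed

text \<open>The library proves completeness of \<open>'a \<Rightarrow>\<^sub>C E\<close> only for a metric domain \<open>'a\<close>,
  so \<open>nat\<close> is given the (discrete) metric inherited from \<open>real\<close>.\<close>

instantiation nat :: metric_space
begin

definition dist_nat :: "nat \<Rightarrow> nat \<Rightarrow> real"
  where "dist_nat m n = dist (real m) (real n)"

definition uniformity_nat :: "(nat \<times> nat) filter"
  where "uniformity_nat = (INF e\<in>{0<..}. principal {(x, y). dist x y < e})"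

instance
proof
  show "uniformity = (INF e\<in>{0<..}. principal {(x, y). dist (x::nat) y < e})"
    by (rule uniformity_nat_def)
  have "eventually (\<lambda>(x', y). x' = x \<longrightarrow> y \<in> U) uniformity" if "x \<in> U" for x :: nat and U
  proof -
    have "(uniformity :: (nat \<times> nat) filter) \<le> principal {(x, y). dist x y < 1}"
      unfolding uniformity_nat_def by (rule INF_lower) simp
    moreover have "y = x" if "dist x y < 1" for y
    proof -
      have "real_of_int \<bar>int x - int y\<bar> < 1"
        using that by (simp add: dist_nat_def dist_real_def)
      then have "\<bar>int x - int y\<bar> < 1"
        by (simp only: of_int_less_1_iff)
      then show ?thesis
        by arith
    qed
    then have "eventually (\<lambda>(x', y). x' = x \<longrightarrow> y \<in> U) (principal {(x, y). dist x y < 1})"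
      using \<open>x \<in> U\<close> by (auto simp: eventually_principal)
    ultimately show ?thesis
      by (rule filter_leD)
  qed
  then show "open U = (\<forall>x\<in>U. eventually (\<lambda>(x', y). x' = x \<longrightarrow> y \<in> U) uniformity)"
    for U :: "nat set"
    using open_discrete[of U] by blast
  show "(dist x y = 0) = (x = y)" and "dist x y \<le> dist x z + dist y z" for x y z :: nat
    by (simp_all add: dist_nat_def dist_triangle2)
qed

end

instance bcontfun :: (metric_space, banach) banach ..

lemma apply_Bcontfun_bounded:
  fixes x :: "nat \<Rightarrow> 'a::metric_space"
  assumes "bounded (range x)"
  shows "apply_bcontfun (Bcontfun x) = x"
  using assms by (intro Bcontfun_inverse) (simp add: bcontfun_def)

lemma tendsto_apply_bcontfun:
  "(s \<longlongrightarrow> l) F \<Longrightarrow> ((\<lambda>j. apply_bcontfun (s j) n) \<longlongrightarrow> apply_bcontfun l n) F"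
  by (rule metric_tendsto_imp_tendsto) (auto intro: always_eventually dist_bounded)

lemma supnorm_eq_norm_Bcontfun:
  fixes x :: "nat \<Rightarrow> 'a::real_normed_vector"
  assumes "x 0 = 0" and "bounded (range x)"
  shows "supnorm x = norm (Bcontfun x)"
proof (rule antisym)
  show "supnorm x \<le> norm (Bcontfun x)"
    using norm_bounded[of "Bcontfun x"] by (intro supnorm_le) (simp add: apply_Bcontfun_bounded[OF assms(2)])
  show "norm (Bcontfun x) \<le> supnorm x"
  proof (rule norm_bound)
    fix n
    show "norm (apply_bcontfun (Bcontfun x) n) \<le> supnorm x"
      using assms(1) supnorm_nonneg[OF assms(2)] norm_le_supnorm[OF assms(2), of n]
      by (cases n) (simp_all add: apply_Bcontfun_bounded[OF assms(2)])
  qed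
qed

lemma bounded_linear_pointwise_bcontfun:
  fixes G :: "nat \<Rightarrow> 'a::real_normed_vector \<Rightarrow> 'b::real_normed_vector"
  assumes lin: "\<And>n. linear (G n)" and "0 \<le> K" and bound: "\<And>n z. norm (G n z) \<le> K * norm z"
  shows "apply_bcontfun (Bcontfun (\<lambda>n. G n (apply_bcontfun v n))) = (\<lambda>n. G n (apply_bcontfun v n))"
    and "bounded_linear (\<lambda>v. Bcontfun (\<lambda>n. G n (apply_bcontfun v n)))"
proof -
  define F where "F v = Bcontfun (\<lambda>n. G n (apply_bcontfun v n))" for v
  have norm_le: "norm (G n (apply_bcontfun v n)) \<le> K * norm v" for v n
    using bound[of n "apply_bcontfun v n"] mult_left_mono[OF norm_bounded \<open>0 \<le> K\<close>] by (rule order.trans)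
  have apply_F: "apply_bcontfun (F v) = (\<lambda>n. G n (apply_bcontfun v n))" for v
    unfolding F_def using norm_le by (intro apply_Bcontfun_bounded boundedI) blast
  then show "apply_bcontfun (Bcontfun (\<lambda>n. G n (apply_bcontfun v n))) = (\<lambda>n. G n (apply_bcontfun v n))"
    by (simp only: F_def)
  have "bounded_linear F"
  proof (rule bounded_linear_intro[where K = K])
    show "F (v + w) = F v + F w" and "F (r *\<^sub>R v) = r *\<^sub>R F v" for v w r
      by (simp_all add: bcontfun_eqI apply_F linear_add[OF lin] linear_scale[OF lin])
    show "norm (F v) \<le> norm v * K" for v
      using norm_le by (intro norm_bound) (simp add: apply_F mult.commute)
  qed
  then show "bounded_linear (\<lambda>v. Bcontfun (\<lambda>n. G n (apply_bcontfun v n)))"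
    by (simp only: F_def[abs_def])
qed

section \<open>Volterra operators along a filtration\<close>

lemma forward_filtration_Lshift:
  "forward_filtration B \<xi> \<Longrightarrow> forward_filtration B (Lshift \<xi>)"
  unfolding forward_filtration_def Lshift_def proj_le_def by (auto simp: comp_def fun_eq_iff)

locale volterra_filtration =
  fixes B :: "('a::banach_lattice \<Rightarrow> 'a) set" and \<xi> :: "nat \<Rightarrow> 'a \<Rightarrow> 'a" and T :: "'a \<Rightarrow> 'a"
  assumes boolean_subalgebra: "boolean_subalgebra B"
    and filtration: "forward_filtration B \<xi>"
    and volterra: "volterra B T"
begin

lemma order_projection_filtration: "order_projection (\<xi> n)"
  using boolean_subalgebra filtration
  unfolding boolean_subalgebra_def forward_filtration_def by blast

lemma linear_filtration: "linear (\<xi> n)"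
  using order_projection_filtration unfolding order_projection_def by blast

lemma bounded_linear_filtration: "bounded_linear (\<xi> n)"
  by (rule order_projection_bounded_linear[OF order_projection_filtration])

lemma norm_filtration_le: "norm (\<xi> n x) \<le> norm x"
  by (rule norm_order_projection_le[OF order_projection_filtration])

lemma filtration_0 [simp]: "\<xi> 0 x = 0"
  using filtration unfolding forward_filtration_def by simp

lemma filtration_absorb: "n \<le> m \<Longrightarrow> \<xi> n (\<xi> m x) = \<xi> n x"
proof (induction m arbitrary: x rule: dec_induct)
  case base
  show ?case
    using order_projection_filtration[of n] unfolding order_projection_def by (metis comp_apply)
next
  case (step m)
  have "\<xi> m (\<xi> (Suc m) x) = \<xi> m x"
    using filtration unfolding forward_filtration_def proj_le_def by (metis comp_apply)
  then show ?case
    by (metis step.IH)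
qed

lemma filtration_T_cong: "\<xi> n x = \<xi> n y \<Longrightarrow> \<xi> n (T x) = \<xi> n (T y)"
  using volterra filtration unfolding volterra_def forward_filtration_def by blast

lemma linear_T: "linear T"
  using volterra unfolding volterra_def positive_operator_def by blast

lemma bounded_linear_T: "bounded_linear T"
  using volterra unfolding volterra_def by (blast intro: positive_operator_bounded_linear)

lemma volterra_filtration_Lshift: "volterra_filtration B (Lshift \<xi>) T"
  by unfold_locales (simp_all add: boolean_subalgebra volterra forward_filtration_Lshift[OF filtration])

lemma hatT_norm_bound:
  obtains K where "0 \<le> K" and "\<And>x n b. norm (x n) \<le> b \<Longrightarrow> norm (hatT T \<xi> x n) \<le> K * b"
proof -
  obtain K where "K > 0" and K: "\<And>z. norm (T z) \<le> norm z * K"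
    using bounded_linear.pos_bounded[OF bounded_linear_T] by blast
  have "norm (hatT T \<xi> x n) \<le> K * b" if "norm (x n) \<le> b" for x n b
  proof -
    have "norm (hatT T \<xi> x n) \<le> norm (T (x n))"
      by (simp add: hatT_def norm_filtration_le)
    also have "\<dots> \<le> K * norm (x n)"
      using K[of "x n"] by (simp add: mult.commute)
    also have "\<dots> \<le> K * b"
      using that \<open>K > 0\<close> by simp
    finally show ?thesis .
  qed
  with \<open>K > 0\<close> show ?thesis
    using that less_imp_le by blast
qed

lemma Mb_linear_combination:
  assumes "x \<in> Mb \<xi>" and "y \<in> Mb \<xi>"
  shows "(\<lambda>n. a *\<^sub>R x n + b *\<^sub>R y n) \<in> Mb \<xi>"
  using assms unfolding Mb_def
  by (auto simp: linear_add[OF linear_filtration] linear_scale[OF linear_filtration]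
      intro: bounded_plus_comp bounded_scaleR_comp)

lemma Mb_add: "x \<in> Mb \<xi> \<Longrightarrow> y \<in> Mb \<xi> \<Longrightarrow> (\<lambda>n. x n + y n) \<in> Mb \<xi>"
  using Mb_linear_combination[of x y 1 1] by simp

lemma Mb_diff: "x \<in> Mb \<xi> \<Longrightarrow> y \<in> Mb \<xi> \<Longrightarrow> (\<lambda>n. x n - y n) \<in> Mb \<xi>"
  using Mb_linear_combination[of x y 1 "- 1"] by simp

lemma Mb_scaleR: "x \<in> Mb \<xi> \<Longrightarrow> (\<lambda>n. c *\<^sub>R x n) \<in> Mb \<xi>"
  using Mb_linear_combination[of x x c 0] by simp

lemma iota_in_Mb: "iota \<xi> x \<in> Mb \<xi>"
  by (rule MbI[where M = "norm x"]) (simp_all add: iota_def filtration_absorb norm_filtration_le)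

lemma zero_in_Mb: "(\<lambda>n. 0) \<in> Mb \<xi>"
  using iota_in_Mb[of 0] by (simp add: iota_def linear_0[OF linear_filtration])

lemma hatT_in_Mb:
  assumes x: "x \<in> Mb \<xi>"
  shows "hatT T \<xi> x \<in> Mb \<xi>"
proof -
  obtain K where "0 \<le> K" and K: "\<And>x n b. norm (x n) \<le> b \<Longrightarrow> norm (hatT T \<xi> x n) \<le> K * b"
    using hatT_norm_bound by metis
  obtain M where M: "\<And>n. norm (x n) \<le> M"
    using MbD(3)[OF x] by (auto simp: bounded_iff)
  show ?thesis
  proof (rule MbI)
    show "hatT T \<xi> x 0 = 0"
      by (simp add: hatT_def)
    show "\<xi> n (hatT T \<xi> x m) = hatT T \<xi> x n" if "1 \<le> n" "n \<le> m" for n m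
    proof -
      have "\<xi> n (x m) = \<xi> n (x n)"
        using MbD(2)[OF x, of n m] MbD(2)[OF x, of n n] that by simp
      then have "\<xi> n (T (x m)) = \<xi> n (T (x n))"
        by (rule filtration_T_cong)
      then show ?thesis
        using that by (simp add: hatT_def filtration_absorb)
    qed
    show "norm (hatT T \<xi> x n) \<le> K * M" for n
      using K M by blast
  qed
qed

lemma iota_T: "iota \<xi> (T x) = hatT T \<xi> (iota \<xi> x)"
proof
  fix n
  have "\<xi> n x = \<xi> n (\<xi> n x)"
    by (simp add: filtration_absorb)
  then show "iota \<xi> (T x) n = hatT T \<xi> (iota \<xi> x) n"
    unfolding iota_def hatT_def by (rule filtration_T_cong)
qed

lemma sshift_hatT: "sshift (hatT T \<xi> x) = hatT T (Lshift \<xi>) (sshift x)"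
  unfolding sshift_def hatT_def Lshift_def by (auto simp: fun_eq_iff)

lemma sshift_iota: "sshift (iota \<xi> x) = iota (Lshift \<xi>) x"
  unfolding sshift_def iota_def Lshift_def by (auto simp: fun_eq_iff)

lemma Lshift_Mb_absorb:
  assumes "y \<in> Mb (Lshift \<xi>)" and "1 \<le> j" and "j \<le> k"
  shows "\<xi> (Suc j) (y k) = y j"
  using MbD(2)[OF assms] assms(2) by (simp add: Lshift_def)

lemma sshift_in_Mb:
  assumes x: "x \<in> Mb \<xi>"
  shows "sshift x \<in> Mb (Lshift \<xi>)"
proof -
  obtain M where M: "\<And>n. norm (x n) \<le> M"
    using MbD(3)[OF x] by (auto simp: bounded_iff)
  then have "0 \<le> M"
    using norm_ge_zero order.trans by blast
  with M show ?thesis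
    by (intro MbI[where M = M]) (auto simp: sshift_def Lshift_def MbD(2)[OF x])
qed

lemma sshift_onto_Mb_Lshift:
  assumes y: "y \<in> Mb (Lshift \<xi>)"
  shows "\<exists>x\<in>Mb \<xi>. sshift x = y"
proof
  \<comment> \<open>\<open>x = (\<xi> 1 (y 1), y 1, y 2, \<dots>)\<close>, padded with \<open>x 0 = 0\<close>\<close>
  define x where "x n = \<xi> n (y (max 1 (n - 1)))" for n
  obtain M where M: "\<And>n. norm (y n) \<le> M"
    using MbD(3)[OF y] by (auto simp: bounded_iff)
  show "x \<in> Mb \<xi>"
  proof (rule MbI[where M = M])
    show "x 0 = 0"
      by (simp add: x_def)
    show "\<xi> n (x m) = x n" if "1 \<le> n" "n \<le> m" for n m
    proof -
      have "\<xi> n (y (max 1 (n - 1))) = \<xi> n (\<xi> (Suc (max 1 (n - 1))) (y (max 1 (m - 1))))"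
        using Lshift_Mb_absorb[OF y, of "max 1 (n - 1)" "max 1 (m - 1)"] that by simp
      also have "\<dots> = \<xi> n (y (max 1 (m - 1)))"
        by (rule filtration_absorb) simp
      finally show ?thesis
        using that by (simp add: x_def filtration_absorb)
    qed
    show "norm (x n) \<le> M" for n
      using norm_filtration_le M order.trans unfolding x_def by blast
  qed
  show "sshift x = y"
  proof
    fix n
    show "sshift x n = y n"
      using MbD(1)[OF y] Lshift_Mb_absorb[OF y, of n n] by (simp add: sshift_def x_def)
  qed
qed

lemma hatT_onto_Lshift:
  assumes "\<forall>y\<in>Mb \<xi>. \<exists>x\<in>Mb \<xi>. hatT T \<xi> x = y"
  shows "\<forall>y\<in>Mb (Lshift \<xi>). \<exists>x\<in>Mb (Lshift \<xi>). hatT T (Lshift \<xi>) x = y"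
proof
  fix y assume "y \<in> Mb (Lshift \<xi>)"
  then obtain z where z: "z \<in> Mb \<xi>" "sshift z = y"
    using sshift_onto_Mb_Lshift by blast
  then obtain x where x: "x \<in> Mb \<xi>" "hatT T \<xi> x = z"
    using assms by blast
  have "hatT T (Lshift \<xi>) (sshift x) = y"
    using z(2) x(2) sshift_hatT[of x] by simp
  with sshift_in_Mb[OF x(1)] show "\<exists>x\<in>Mb (Lshift \<xi>). hatT T (Lshift \<xi>) x = y"
    by blast
qed

lemma emb_bounded_op_iota: "emb_bounded_op (Mb \<xi>) (iota \<xi>)"
  unfolding emb_bounded_op_def
proof (intro conjI allI exI)
  show "iota \<xi> x \<in> Mb \<xi>" for x
    by (rule iota_in_Mb)
  show "iota \<xi> (a *\<^sub>R x + b *\<^sub>R y) = (\<lambda>n. a *\<^sub>R iota \<xi> x n + b *\<^sub>R iota \<xi> y n)" for x y a b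
    by (simp add: iota_def linear_add[OF linear_filtration] linear_scale[OF linear_filtration])
  show "supnorm (iota \<xi> x) \<le> 1 * norm x" for x
    by (simp add: supnorm_le iota_def norm_filtration_le)
qed

lemma seq_bounded_op_hatT: "seq_bounded_op (Mb \<xi>) (Mb \<xi>) (hatT T \<xi>)"
  unfolding seq_bounded_op_def
proof (intro conjI ballI allI)
  show "hatT T \<xi> x \<in> Mb \<xi>" if "x \<in> Mb \<xi>" for x
    using that by (rule hatT_in_Mb)
  show "hatT T \<xi> (\<lambda>n. a *\<^sub>R x n + b *\<^sub>R y n) = (\<lambda>n. a *\<^sub>R hatT T \<xi> x n + b *\<^sub>R hatT T \<xi> y n)"
    for x y a b
    by (simp add: hatT_def linear_add[OF linear_filtration] linear_scale[OF linear_filtration]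
        linear_add[OF linear_T] linear_scale[OF linear_T])
  obtain K where "0 \<le> K" and K: "\<And>x n b. norm (x n) \<le> b \<Longrightarrow> norm (hatT T \<xi> x n) \<le> K * b"
    using hatT_norm_bound by metis
  have "supnorm (hatT T \<xi> x) \<le> K * supnorm x" if "x \<in> Mb \<xi>" for x
  proof (rule supnorm_le)
    fix n :: nat assume "1 \<le> n"
    then show "norm (hatT T \<xi> x n) \<le> K * supnorm x"
      using K norm_le_supnorm[OF MbD(3)[OF that]] by blast
  qed
  then show "\<exists>C. \<forall>x\<in>Mb \<xi>. supnorm (hatT T \<xi> x) \<le> C * supnorm x"
    by blast
qed

lemma seq_bounded_op_sshift: "seq_bounded_op (Mb \<xi>) (Mb (Lshift \<xi>)) sshift"
  unfolding seq_bounded_op_def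
proof (intro conjI ballI allI exI)
  show "sshift x \<in> Mb (Lshift \<xi>)" if "x \<in> Mb \<xi>" for x
    using that by (rule sshift_in_Mb)
  show "sshift (\<lambda>n. a *\<^sub>R x n + b *\<^sub>R y n) = (\<lambda>n. a *\<^sub>R sshift x n + b *\<^sub>R sshift y n)"
    for x y :: "nat \<Rightarrow> 'a" and a b
    by (simp add: sshift_def fun_eq_iff)
  show "supnorm (sshift x) \<le> 1 * supnorm x" if "x \<in> Mb \<xi>" for x
    using norm_le_supnorm[OF MbD(3)[OF that]] by (intro supnorm_le) (simp add: sshift_def)
qed

definition Mb_bcontfun :: "(nat \<Rightarrow>\<^sub>C 'a) set"
  where "Mb_bcontfun = {v. apply_bcontfun v \<in> Mb \<xi>}"

definition hatT_bcontfun :: "(nat \<Rightarrow>\<^sub>C 'a) \<Rightarrow> (nat \<Rightarrow>\<^sub>C 'a)"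
  where "hatT_bcontfun v = Bcontfun (hatT T \<xi> (apply_bcontfun v))"

lemma Bcontfun_in_Mb_bcontfun:
  assumes "y \<in> Mb \<xi>"
  shows "apply_bcontfun (Bcontfun y) = y" and "Bcontfun y \<in> Mb_bcontfun"
  using apply_Bcontfun_bounded[OF MbD(3)[OF assms]] assms by (simp_all add: Mb_bcontfun_def)

lemma pointwise_hatT_bcontfun:
  shows apply_hatT_bcontfun: "apply_bcontfun (hatT_bcontfun v) = hatT T \<xi> (apply_bcontfun v)"
    and bounded_linear_hatT_bcontfun: "bounded_linear hatT_bcontfun"
proof -
  obtain K where "0 \<le> K" and K: "\<And>x n b. norm (x n) \<le> b \<Longrightarrow> norm (hatT T \<xi> x n) \<le> K * b"
    using hatT_norm_bound by metis
  have lin: "linear (\<lambda>z. \<xi> n (T z))" for n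
    using linear_compose[OF linear_T linear_filtration] by (simp add: o_def)
  have "norm (\<xi> n (T z)) \<le> K * norm z" for n z
    using K[of "\<lambda>_. z" n "norm z"] by (simp add: hatT_def)
  note pointwise = bounded_linear_pointwise_bcontfun[OF lin \<open>0 \<le> K\<close> this]
  show "apply_bcontfun (hatT_bcontfun v) = hatT T \<xi> (apply_bcontfun v)"
    unfolding hatT_bcontfun_def hatT_def by (rule pointwise(1))
  show "bounded_linear hatT_bcontfun"
    using pointwise(2) by (simp add: hatT_bcontfun_def[abs_def] hatT_def)
qed

lemma closed_Mb_bcontfun: "closed Mb_bcontfun"
  unfolding closed_sequential_limits Mb_bcontfun_def
proof (intro allI impI)
  fix s l assume "(\<forall>j. s j \<in> {v. apply_bcontfun v \<in> Mb \<xi>}) \<and> s \<longlonglongrightarrow> l"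
  then have s: "\<And>j. apply_bcontfun (s j) \<in> Mb \<xi>" and lim: "s \<longlonglongrightarrow> l"
    by auto
  have "apply_bcontfun l \<in> Mb \<xi>"
    unfolding Mb_def
  proof (intro CollectI conjI allI impI)
    have "(\<lambda>j. apply_bcontfun (s j) 0) \<longlonglongrightarrow> apply_bcontfun l 0"
      using lim by (rule tendsto_apply_bcontfun)
    then show "apply_bcontfun l 0 = 0"
      using MbD(1)[OF s] by (simp add: LIMSEQ_const_iff)
    fix n m :: nat assume "1 \<le> n \<and> n \<le> m"
    then have "(\<lambda>j. \<xi> n (apply_bcontfun (s j) m)) = (\<lambda>j. apply_bcontfun (s j) n)"
      by (simp add: MbD(2)[OF s])
    moreover have "(\<lambda>j. \<xi> n (apply_bcontfun (s j) m)) \<longlonglongrightarrow> \<xi> n (apply_bcontfun l m)"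
      using bounded_linear_filtration tendsto_apply_bcontfun[OF lim] by (rule bounded_linear.tendsto)
    ultimately have "(\<lambda>j. apply_bcontfun (s j) n) \<longlonglongrightarrow> \<xi> n (apply_bcontfun l m)"
      by simp
    then show "\<xi> n (apply_bcontfun l m) = apply_bcontfun l n"
      using tendsto_apply_bcontfun[OF lim] by (rule LIMSEQ_unique)
  qed simp
  then show "l \<in> {v. apply_bcontfun v \<in> Mb \<xi>}"
    by simp
qed

lemma subspace_Mb_bcontfun: "subspace Mb_bcontfun"
  unfolding Mb_bcontfun_def
  by (rule subspaceI) (simp_all add: zero_in_Mb Mb_add Mb_scaleR flip: zero_bcontfun_def)

lemma hatT_bcontfun_image:
  assumes onto: "\<forall>y\<in>Mb \<xi>. \<exists>x\<in>Mb \<xi>. hatT T \<xi> x = y"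
  shows "hatT_bcontfun ` Mb_bcontfun = Mb_bcontfun"
proof
  show "hatT_bcontfun ` Mb_bcontfun \<subseteq> Mb_bcontfun"
    by (auto simp: Mb_bcontfun_def apply_hatT_bcontfun hatT_in_Mb)
  show "Mb_bcontfun \<subseteq> hatT_bcontfun ` Mb_bcontfun"
  proof
    fix v assume "v \<in> Mb_bcontfun"
    then obtain x where "x \<in> Mb \<xi>" and "hatT T \<xi> x = apply_bcontfun v"
      using onto unfolding Mb_bcontfun_def by blast
    then have "hatT_bcontfun (Bcontfun x) = v"
      by (intro bcontfun_eqI) (simp add: apply_hatT_bcontfun Bcontfun_in_Mb_bcontfun)
    then show "v \<in> hatT_bcontfun ` Mb_bcontfun"
      using Bcontfun_in_Mb_bcontfun(2)[OF \<open>x \<in> Mb \<xi>\<close>] by blast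
  qed
qed

lemma hatT_bounded_preimage:
  assumes onto: "\<forall>y\<in>Mb \<xi>. \<exists>x\<in>Mb \<xi>. hatT T \<xi> x = y"
  obtains c where "0 < c"
    and "\<And>y. y \<in> Mb \<xi> \<Longrightarrow> \<exists>x\<in>Mb \<xi>. hatT T \<xi> x = y \<and> supnorm x \<le> c * supnorm y"
proof -
  obtain c where "0 < c" and c: "\<And>w. w \<in> Mb_bcontfun \<Longrightarrow>
      \<exists>v\<in>Mb_bcontfun. hatT_bcontfun v = w \<and> norm v \<le> c * norm w"
    using open_mapping_bounded_preimage[OF bounded_linear_hatT_bcontfun closed_Mb_bcontfun
        subspace_Mb_bcontfun, unfolded hatT_bcontfun_image[OF onto], OF closed_Mb_bcontfun]
    by metis
  show ?thesis
  proof (rule that[OF \<open>0 < c\<close>])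
    fix y assume y: "y \<in> Mb \<xi>"
    then obtain v where "v \<in> Mb_bcontfun" and v: "hatT_bcontfun v = Bcontfun y"
      and v_norm: "norm v \<le> c * norm (Bcontfun y)"
      using c Bcontfun_in_Mb_bcontfun by blast
    then have x: "apply_bcontfun v \<in> Mb \<xi>"
      by (simp add: Mb_bcontfun_def)
    have "hatT T \<xi> (apply_bcontfun v) = y"
      using arg_cong[OF v, of apply_bcontfun] by (simp add: apply_hatT_bcontfun Bcontfun_in_Mb_bcontfun(1)[OF y])
    moreover have "supnorm (apply_bcontfun v) \<le> c * supnorm y"
      using v_norm supnorm_eq_norm_Bcontfun[OF MbD(1,3)[OF x]] supnorm_eq_norm_Bcontfun[OF MbD(1,3)[OF y]]
      by (simp add: apply_bcontfun_inverse)
    ultimately show "\<exists>x\<in>Mb \<xi>. hatT T \<xi> x = y \<and> supnorm x \<le> c * supnorm y"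
      using x by blast
  qed
qed

lemma seq_open_map_hatT:
  assumes "\<forall>y\<in>Mb \<xi>. \<exists>x\<in>Mb \<xi>. hatT T \<xi> x = y"
  shows "seq_open_map (Mb \<xi>) (hatT T \<xi>)"
proof -
  obtain c where "0 < c"
    and "\<And>y. y \<in> Mb \<xi> \<Longrightarrow> \<exists>x\<in>Mb \<xi>. hatT T \<xi> x = y \<and> supnorm x \<le> c * supnorm y"
    using hatT_bounded_preimage[OF assms] by metis
  moreover have "hatT T \<xi> (\<lambda>n. x n + y n) = (\<lambda>n. hatT T \<xi> x n + hatT T \<xi> y n)" for x y
    by (simp add: hatT_def linear_add[OF linear_T] linear_add[OF linear_filtration])
  ultimately show ?thesis
    by (intro seq_open_map_if_bounded_preimage[OF Mb_add Mb_diff _ hatT_in_Mb]) auto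
qed

end

lemma volterra_filtration_funpow_Lshift:
  "volterra_filtration B \<xi> T \<Longrightarrow> volterra_filtration B ((Lshift ^^ k) \<xi>) T"
  by (induction k) (simp_all add: volterra_filtration.volterra_filtration_Lshift)

lemma hatT_onto_funpow_Lshift:
  assumes "volterra_filtration B \<xi> T" and "\<forall>y\<in>Mb \<xi>. \<exists>x\<in>Mb \<xi>. hatT T \<xi> x = y"
  shows "\<forall>y\<in>Mb ((Lshift ^^ k) \<xi>). \<exists>x\<in>Mb ((Lshift ^^ k) \<xi>). hatT T ((Lshift ^^ k) \<xi>) x = y"
proof (induction k)
  case 0
  show ?case
    using assms(2) by simp
next
  case (Suc k)
  show ?case
    using volterra_filtration.hatT_onto_Lshift[OF volterra_filtration_funpow_Lshift[OF assms(1)] Suc.IH]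
    by simp
qed

theorem corollary4p7:
  fixes B :: "('a::banach_lattice \<Rightarrow> 'a) set"
    and \<xi> :: "nat \<Rightarrow> 'a \<Rightarrow> 'a"
    and T :: "'a \<Rightarrow> 'a"
  assumes "KB_space TYPE('a)"
    and "boolean_subalgebra B"
    and "forward_filtration B \<xi>"
    and "volterra B T"
  shows "(\<forall>k::nat.
           (\<forall>x. iota ((Lshift ^^ k) \<xi>) (T x) = hatT T ((Lshift ^^ k) \<xi>) (iota ((Lshift ^^ k) \<xi>) x)) \<and>
           (\<forall>x\<in>Mb ((Lshift ^^ k) \<xi>).
              sshift (hatT T ((Lshift ^^ k) \<xi>) x) = hatT T ((Lshift ^^ Suc k) \<xi>) (sshift x)) \<and>
           (\<forall>x. sshift (iota ((Lshift ^^ k) \<xi>) x) = iota ((Lshift ^^ Suc k) \<xi>) x) \<and>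
           bounded_linear T \<and>
           emb_bounded_op (Mb ((Lshift ^^ k) \<xi>)) (iota ((Lshift ^^ k) \<xi>)) \<and>
           seq_bounded_op (Mb ((Lshift ^^ k) \<xi>)) (Mb ((Lshift ^^ k) \<xi>)) (hatT T ((Lshift ^^ k) \<xi>)) \<and>
           seq_bounded_op (Mb ((Lshift ^^ k) \<xi>)) (Mb ((Lshift ^^ Suc k) \<xi>)) sshift) \<and>
         ((\<forall>y\<in>Mb \<xi>. \<exists>x\<in>Mb \<xi>. hatT T \<xi> x = y) \<longrightarrow>
         (\<forall>k\<ge>1. seq_open_map (Mb ((Lshift ^^ k) \<xi>)) (hatT T ((Lshift ^^ k) \<xi>))))"
proof -
  have base: "volterra_filtration B \<xi> T"
    using assms(2-4) by unfold_locales
  then interpret level: volterra_filtration B "(Lshift ^^ k) \<xi>" T for k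
    by (rule volterra_filtration_funpow_Lshift)
  show ?thesis
    by (simp add: level.iota_T level.sshift_hatT level.sshift_iota level.bounded_linear_T
        level.emb_bounded_op_iota level.seq_bounded_op_hatT level.seq_bounded_op_sshift
        level.seq_open_map_hatT hatT_onto_funpow_Lshift[OF base])
qed

end
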